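(* Consider the online optimization problem with multi-step memory cost described in the context. Assume that for every $t$ the hitting cost $f(\cdot,y_t):\mathcal X\to\mathbb R$ is $\alpha$-polyhedral for some $\alpha>0$, and let $\beta=\sum_{i=1}^q\|C_i\|$, where $\|C_i\|$ is the matrix norm induced by the $l_p$ vector norm. Then the algorithm Robust, which chooses $x_t=\arg\min_{x\in\mathcal X}f(x,y_t)$ for every $t=1,\dots,T$, satisfies for every input $\bm s$ $$\mathrm{cost}(\mathrm{Robust},\bm s)\le \max\!\left(\tfrac{\beta+1}{\alpha},1\right)\mathrm{cost}(\mathrm{OPT},\bm s).$$
   Context: Problem: Let $\mathcal X\subseteq\mathbb R^d$, $\mathcal Y\subseteq\mathbb R^m$, $f:\mathcal X\times\mathcal Y\to[0,\infty)$, $\|\cdot\|$ the $l_p$ norm on $\mathbb R^d$ ($p\ge1$), a memory length $q\ge1$ and matrices $C_1,\dots,C_q\in\mathbb R^{d\times d}$. An instance $\bm s$ consists of given initial actions $x_{1-q},\dots,x_0\in\mathcal X$ (shared by all algorithms) and contexts $y_1,\dots,y_T\in\mathcal Y$. At each step $t$ the context $y_t$ is revealed and an online algorithm irrevocably chooses $x_t\in\mathcal X$. The memory cost is $d(x_t,x_{t-q:t-1})=\|x_t-\sum_{i=1}^q C_i x_{t-i}\|$ and the total cost of an algorithm is $\sum_{t=1}^T f(x_t,y_t)+d(x_t,x_{t-q:t-1})$. $\mathrm{cost}(\mathrm{OPT},\bm s)$ is the optimal offline cost, i.e. the infimum of this total cost over all $x_1,\dots,x_T\in\mathcal X$ with all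 contexts known in advance. $\alpha$-polyhedral: $f(\cdot,y)$ has a unique minimizer $x^*\in\mathcal X$ and $f(x,y)-f(x^*,y)\ge\alpha\|x-x^*\|$ for all $x\in\mathcal X$. *)

theory Defs
  imports "HOL-Analysis.Analysis"
begin

definition lp_norm :: "real \<Rightarrow> real^'n \<Rightarrow> real" where
  "lp_norm p x = (\<Sum>i\<in>UNIV. \<bar>x $ i\<bar> powr p) powr (1 / p)"

definition induced_norm :: "real \<Rightarrow> real^'n^'n \<Rightarrow> real" where
  "induced_norm p A = Sup ((\<lambda>x. lp_norm p (A *v x) / lp_norm p x) ` {x. x \<noteq> 0})"

definition polyhedral :: "(real^'n) set \<Rightarrow> real \<Rightarrow> real \<Rightarrow> (real^'n \<Rightarrow> real) \<Rightarrow> bool" where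
  "polyhedral X p \<alpha> g \<longleftrightarrow>
     (\<exists>!xs. xs \<in> X \<and> (\<forall>x\<in>X. g xs \<le> g x)) \<and>
     (\<forall>xs\<in>X. (\<forall>x\<in>X. g xs \<le> g x) \<longrightarrow> (\<forall>x\<in>X. g x - g xs \<ge> \<alpha> * lp_norm p (x - xs)))"

text \<open>Total cost over steps 1..T of an action sequence x (indexed by int; x t for
  t \<in> {1-q..0} are the initial actions).\<close>
definition total_cost ::
  "(real^'n \<Rightarrow> 'y \<Rightarrow> real) \<Rightarrow> real \<Rightarrow> nat \<Rightarrow> (nat \<Rightarrow> real^'n^'n) \<Rightarrow> nat
    \<Rightarrow> (int \<Rightarrow> 'y) \<Rightarrow> (int \<Rightarrow> real^'n) \<Rightarrow> real" where
  "total_cost f p q C T y x =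
     (\<Sum>t\<in>{1..int T}. f (x t) (y t)
        + lp_norm p (x t - (\<Sum>i\<in>{1..q}. C i *v x (t - int i))))"

definition feasible :: "(real^'n) set \<Rightarrow> nat \<Rightarrow> nat \<Rightarrow> (int \<Rightarrow> real^'n) \<Rightarrow> (int \<Rightarrow> real^'n) \<Rightarrow> bool" where
  "feasible X q T x0 x \<longleftrightarrow> (\<forall>t\<in>{1 - int q..0}. x t = x0 t) \<and> (\<forall>t\<in>{1..int T}. x t \<in> X)"

definition opt_cost where
  "opt_cost X f p q C T y x0 = Inf (total_cost f p q C T y ` {x. feasible X q T x0 x})"

definition robust :: "(real^'n) set \<Rightarrow> (real^'n \<Rightarrow> 'y \<Rightarrow> real) \<Rightarrow> (int \<Rightarrow> 'y) \<Rightarrow> (int \<Rightarrow> real^'n) \<Rightarrow> int \<Rightarrow> real^'n" where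
  "robust X f y x0 t = (if t \<le> 0 then x0 t else (THE xs. xs \<in> X \<and> (\<forall>x\<in>X. f xs (y t) \<le> f x (y t))))"

end

theory Submission
  imports Defs
begin

text \<open>Compare Robust's actions \<open>r\<^sub>t\<close> with an arbitrary feasible sequence \<open>x\<^sub>t\<close> and put
  \<open>d\<^sub>t = \<parallel>x\<^sub>t - r\<^sub>t\<parallel>\<close>. Polyhedrality of every hitting cost gives
  \<open>\<alpha> \<Sum> d\<^sub>t \<le> \<Sum> f(x\<^sub>t) - \<Sum> f(r\<^sub>t)\<close>. By the triangle inequality the memory cost of \<open>r\<close> at
  time \<open>t\<close> exceeds that of \<open>x\<close> by at most \<open>d\<^sub>t + \<Sum>\<^sub>i \<parallel>C\<^sub>i\<parallel> d\<^sub>t\<^sub>-\<^sub>i\<close>; since both sequences start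
  from the same initial actions, summing over \<open>t\<close> costs at most \<open>(1 + \<beta>) \<Sum> d\<^sub>t\<close>. Hence
  \<open>cost(r) \<le> F\<^sub>r + (1 + \<beta>)/\<alpha> (F\<^sub>x - F\<^sub>r) + M\<^sub>x \<le> max ((1 + \<beta>)/\<alpha>) 1 \<cdot> cost(x)\<close>, where
  \<open>0 \<le> F\<^sub>r \<le> F\<^sub>x\<close> are the hitting costs and \<open>M\<^sub>x\<close> the memory cost of \<open>x\<close>; now take the infimum
  over \<open>x\<close>.\<close>

lemma convex_on_powr_nonneg:
  fixes p :: real
  assumes "p \<ge> 1"
  shows "convex_on {0..} (\<lambda>x. x powr p)"
proof
  have shrink: "(c * u) powr p \<le> c * u powr p" if "0 \<le> c" "c \<le> 1" "u \<ge> 0" for c u :: real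
  proof -
    have "c powr p \<le> c"
      using that assms powr_le_one_le[of c p] by (cases "c = 0") auto
    then show ?thesis
      using that by (simp add: powr_mult mult_right_mono)
  qed
  fix t x y :: real
  assume t: "0 < t" "t < 1" and xy: "x \<in> {0..}" "y \<in> {0..}"
  consider "x = 0" | "y = 0" | "x > 0" "y > 0"
    using xy by fastforce
  then show "((1 - t) *\<^sub>R x + t *\<^sub>R y) powr p \<le> (1 - t) * x powr p + t * y powr p"
  proof cases
    case 1
    then show ?thesis using shrink[of t y] t xy by simp
  next
    case 2
    then show ?thesis using shrink[of "1 - t" x] t xy by simp
  next
    case 3
    then show ?thesis
      using convex_onD[OF powr_convex[OF assms], of t x y] t by simp
  qed
qed (rule convex_real_interval)

lemma lp_norm_nonneg: "lp_norm p x \<ge> 0"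
  unfolding lp_norm_def by simp

lemma lp_norm_zero [simp]: "lp_norm p 0 = 0"
  unfolding lp_norm_def by simp

lemma lp_norm_minus_cancel [simp]: "lp_norm p (- x) = lp_norm p x"
  unfolding lp_norm_def by simp

lemma lp_norm_powr:
  assumes "p \<ge> 1"
  shows "lp_norm p x powr p = (\<Sum>i\<in>UNIV. \<bar>x $ i\<bar> powr p)"
  using assms unfolding lp_norm_def by (simp add: powr_powr sum_nonneg)

lemma lp_norm_pos:
  assumes "x \<noteq> 0"
  shows "lp_norm p x > 0"
proof -
  obtain j where "x $ j \<noteq> 0"
    using assms by (auto simp: vec_eq_iff)
  then have "0 < \<bar>x $ j\<bar> powr p"
    by simp
  also have "\<dots> \<le> (\<Sum>i\<in>UNIV. \<bar>x $ i\<bar> powr p)"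
    by (rule member_le_sum) auto
  finally show ?thesis
    unfolding lp_norm_def by simp
qed

lemma abs_component_le_lp_norm:
  assumes "p \<ge> 1"
  shows "\<bar>x $ j\<bar> \<le> lp_norm p x"
proof -
  have "\<bar>x $ j\<bar> powr p \<le> (\<Sum>i\<in>UNIV. \<bar>x $ i\<bar> powr p)"
    by (rule member_le_sum) auto
  then have "(\<bar>x $ j\<bar> powr p) powr (1/p) \<le> (\<Sum>i\<in>UNIV. \<bar>x $ i\<bar> powr p) powr (1/p)"
    using assms by (intro powr_mono2) auto
  then show ?thesis
    using assms unfolding lp_norm_def by (simp add: powr_powr)
qed

lemma lp_norm_le_if_components_le:
  fixes x :: "real^'n"
  assumes "p \<ge> 1" and "K \<ge> 0" and "\<And>i. \<bar>x $ i\<bar> \<le> K"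
  shows "lp_norm p x \<le> real CARD('n) powr (1/p) * K"
proof -
  have "(\<Sum>i\<in>UNIV. \<bar>x $ i\<bar> powr p) \<le> (\<Sum>i\<in>(UNIV::'n set). K powr p)"
    using assms by (intro sum_mono powr_mono2) auto
  then have "lp_norm p x \<le> (real CARD('n) * K powr p) powr (1/p)"
    unfolding lp_norm_def using assms(1) by (intro powr_mono2) (auto intro: sum_nonneg)
  also have "\<dots> = real CARD('n) powr (1/p) * K"
    using assms by (simp add: powr_mult powr_powr)
  finally show ?thesis .
qed

text \<open>Minkowski's inequality: after scaling by \<open>s = \<parallel>a\<parallel> + \<parallel>b\<parallel>\<close>, each
  \<open>\<bar>a\<^sub>i + b\<^sub>i\<bar> / s\<close> is a convex combination of \<open>\<bar>a\<^sub>i\<bar> / \<parallel>a\<parallel>\<close> and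
  \<open>\<bar>b\<^sub>i\<bar> / \<parallel>b\<parallel>\<close>, whose \<open>p\<close>-th powers both sum to 1.\<close>
lemma lp_norm_triangle:
  fixes a b :: "real^'n"
  assumes p: "p \<ge> 1"
  shows "lp_norm p (a + b) \<le> lp_norm p a + lp_norm p b"
proof (cases "a = 0 \<or> b = 0")
  case True
  then show ?thesis using lp_norm_nonneg by auto
next
  case False
  define A where "A = lp_norm p a"
  define B where "B = lp_norm p b"
  define s where "s = A + B"
  define l where "l = A / s"
  have A: "A > 0" and B: "B > 0"
    using False lp_norm_pos unfolding A_def B_def by auto
  then have s: "s > 0" and l: "0 \<le> l" "l \<le> 1" "1 - l = B / s"
    unfolding l_def s_def by (auto simp: field_simps)
  have pointwise: "(\<bar>(a + b) $ i\<bar> / s) powr p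
      \<le> l * (\<bar>a $ i\<bar> / A) powr p + (1 - l) * (\<bar>b $ i\<bar> / B) powr p" for i
  proof -
    have "\<bar>(a + b) $ i\<bar> / s \<le> \<bar>b $ i\<bar> / s + \<bar>a $ i\<bar> / s"
      using s by (simp add: divide_right_mono abs_triangle_ineq add_divide_distrib[symmetric])
    also have "\<dots> = (1 - l) * (\<bar>b $ i\<bar> / B) + l * (\<bar>a $ i\<bar> / A)"
      using A B l(3) unfolding l_def by simp
    finally have "\<bar>(a + b) $ i\<bar> / s \<le> (1 - l) * (\<bar>b $ i\<bar> / B) + l * (\<bar>a $ i\<bar> / A)" .
    then have "(\<bar>(a + b) $ i\<bar> / s) powr p \<le> ((1 - l) * (\<bar>b $ i\<bar> / B) + l * (\<bar>a $ i\<bar> / A)) powr p"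
      using p s by (intro powr_mono2) auto
    also have "\<dots> \<le> (1 - l) * (\<bar>b $ i\<bar> / B) powr p + l * (\<bar>a $ i\<bar> / A) powr p"
      using convex_onD[OF convex_on_powr_nonneg[OF p], of l "\<bar>b $ i\<bar> / B" "\<bar>a $ i\<bar> / A"] A B l
      by simp
    finally show ?thesis by simp
  qed
  have "(\<Sum>i\<in>UNIV. \<bar>(a + b) $ i\<bar> powr p) / s powr p = (\<Sum>i\<in>UNIV. (\<bar>(a + b) $ i\<bar> / s) powr p)"
    by (simp add: powr_divide sum_divide_distrib)
  also have "\<dots> \<le> (\<Sum>i\<in>UNIV. l * (\<bar>a $ i\<bar> / A) powr p + (1 - l) * (\<bar>b $ i\<bar> / B) powr p)"
    by (rule sum_mono) (rule pointwise)
  also have "\<dots> = l * (lp_norm p a powr p / A powr p) + (1 - l) * (lp_norm p b powr p / B powr p)"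
    using A B by (simp add: lp_norm_powr[OF p] powr_divide sum.distrib sum_distrib_left sum_divide_distrib)
  also have "\<dots> = 1"
    using A B unfolding A_def B_def by simp
  finally have "(\<Sum>i\<in>UNIV. \<bar>(a + b) $ i\<bar> powr p) \<le> s powr p"
    using s by (simp add: divide_le_eq)
  then have "lp_norm p (a + b) \<le> (s powr p) powr (1/p)"
    unfolding lp_norm_def using p by (intro powr_mono2) (auto intro: sum_nonneg)
  then show ?thesis
    using s p unfolding A_def B_def s_def by (simp add: powr_powr)
qed

lemma lp_norm_sum_le:
  fixes g :: "'i \<Rightarrow> real^'n"
  assumes "p \<ge> 1"
  shows "lp_norm p (\<Sum>i\<in>I. g i) \<le> (\<Sum>i\<in>I. lp_norm p (g i))"
proof (induction I rule: infinite_finite_induct)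
  case (insert i I)
  then show ?case
    using lp_norm_triangle[OF assms, of "g i" "\<Sum>i\<in>I. g i"] by simp
qed simp_all

lemma lp_norm_matrix_vector_mult_le_entry_sum:
  fixes M :: "real^'n^'m"
  assumes p: "p \<ge> 1"
  shows "lp_norm p (M *v x) \<le> real CARD('m) powr (1/p) * ((\<Sum>i\<in>UNIV. \<Sum>j\<in>UNIV. \<bar>M $ i $ j\<bar>) * lp_norm p x)"
proof (rule lp_norm_le_if_components_le[OF p])
  show "0 \<le> (\<Sum>i\<in>UNIV. \<Sum>j\<in>UNIV. \<bar>M $ i $ j\<bar>) * lp_norm p x"
    by (intro mult_nonneg_nonneg sum_nonneg lp_norm_nonneg) auto
  fix i
  have "\<bar>(M *v x) $ i\<bar> \<le> (\<Sum>j\<in>UNIV. \<bar>M $ i $ j\<bar> * \<bar>x $ j\<bar>)"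
    unfolding matrix_vector_mult_def by (simp add: order_trans[OF sum_abs] abs_mult)
  also have "\<dots> \<le> (\<Sum>j\<in>UNIV. \<bar>M $ i $ j\<bar>) * lp_norm p x"
    unfolding sum_distrib_right by (intro sum_mono mult_left_mono abs_component_le_lp_norm[OF p]) auto
  also have "\<dots> \<le> (\<Sum>i\<in>UNIV. \<Sum>j\<in>UNIV. \<bar>M $ i $ j\<bar>) * lp_norm p x"
    by (intro mult_right_mono lp_norm_nonneg member_le_sum[where f="\<lambda>i. \<Sum>j\<in>UNIV. \<bar>M $ i $ j\<bar>"])
      (auto intro: sum_nonneg)
  finally show "\<bar>(M *v x) $ i\<bar> \<le> (\<Sum>i\<in>UNIV. \<Sum>j\<in>UNIV. \<bar>M $ i $ j\<bar>) * lp_norm p x" .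
qed

lemma induced_norm_ge_ratio:
  fixes M :: "real^'n^'n"
  assumes p: "p \<ge> 1" and "x \<noteq> 0"
  shows "lp_norm p (M *v x) / lp_norm p x \<le> induced_norm p M"
proof -
  have "bdd_above ((\<lambda>x. lp_norm p (M *v x) / lp_norm p x) ` {x. x \<noteq> 0})"
  proof (rule bdd_aboveI2)
    fix x :: "real^'n"
    assume "x \<in> {x. x \<noteq> 0}"
    then show "lp_norm p (M *v x) / lp_norm p x
        \<le> real CARD('n) powr (1/p) * (\<Sum>i\<in>UNIV. \<Sum>j\<in>UNIV. \<bar>M $ i $ j\<bar>)"
      using lp_norm_pos[of x] lp_norm_matrix_vector_mult_le_entry_sum[OF p, of M x]
      by (simp add: divide_le_eq mult.assoc)
  qed
  then show ?thesis
    unfolding induced_norm_def using assms(2) by (intro cSup_upper) auto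
qed

lemma induced_norm_nonneg:
  assumes "p \<ge> 1"
  shows "induced_norm p M \<ge> 0"
proof -
  have "(1::real^'n) \<noteq> 0"
    by (simp add: vec_eq_iff)
  then show ?thesis
    using induced_norm_ge_ratio[OF assms, of 1 M]
    by (meson divide_nonneg_nonneg lp_norm_nonneg order_trans)
qed

lemma lp_norm_matrix_vector_mult_le:
  assumes p: "p \<ge> 1"
  shows "lp_norm p (M *v x) \<le> induced_norm p M * lp_norm p x"
proof (cases "x = 0")
  case True
  then show ?thesis by simp
next
  case False
  then show ?thesis
    using induced_norm_ge_ratio[OF p False] lp_norm_pos[OF False]
    by (simp add: divide_le_eq mult.commute)
qed

definition memory_cost :: "real \<Rightarrow> nat \<Rightarrow> (nat \<Rightarrow> real^'n^'n) \<Rightarrow> (int \<Rightarrow> real^'n) \<Rightarrow> int \<Rightarrow> real" where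
  "memory_cost p q C x t = lp_norm p (x t - (\<Sum>i\<in>{1..q}. C i *v x (t - int i)))"

lemma total_cost_eq:
  "total_cost f p q C T y x
    = (\<Sum>t\<in>{1..int T}. f (x t) (y t)) + (\<Sum>t\<in>{1..int T}. memory_cost p q C x t)"
  unfolding total_cost_def memory_cost_def by (simp add: sum.distrib)

lemma memory_cost_le:
  assumes p: "p \<ge> 1"
  shows "memory_cost p q C r t \<le> memory_cost p q C x t + lp_norm p (x t - r t)
    + (\<Sum>i\<in>{1..q}. induced_norm p (C i) * lp_norm p (x (t - int i) - r (t - int i)))"
proof -
  let ?mx = "x t - (\<Sum>i\<in>{1..q}. C i *v x (t - int i))"
  let ?e = "\<Sum>i\<in>{1..q}. C i *v (x (t - int i) - r (t - int i))"
  have decompose: "r t - (\<Sum>i\<in>{1..q}. C i *v r (t - int i)) = ?mx + (- (x t - r t) + ?e)"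
    by (simp add: matrix_vector_mult_diff_distrib sum_subtractf algebra_simps)
  have "memory_cost p q C r t \<le> memory_cost p q C x t + lp_norm p (- (x t - r t) + ?e)"
    unfolding memory_cost_def decompose by (rule lp_norm_triangle[OF p])
  also have "lp_norm p (- (x t - r t) + ?e) \<le> lp_norm p (x t - r t) + lp_norm p ?e"
    using lp_norm_triangle[OF p, of "- (x t - r t)" ?e] by (simp only: lp_norm_minus_cancel)
  also have "lp_norm p ?e \<le> (\<Sum>i\<in>{1..q}. lp_norm p (C i *v (x (t - int i) - r (t - int i))))"
    by (rule lp_norm_sum_le[OF p])
  also have "\<dots> \<le> (\<Sum>i\<in>{1..q}. induced_norm p (C i) * lp_norm p (x (t - int i) - r (t - int i)))"
    by (intro sum_mono lp_norm_matrix_vector_mult_le[OF p])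
  finally show ?thesis
    by simp
qed

lemma sum_shifted_le:
  fixes d :: "int \<Rightarrow> real"
  assumes nonneg: "\<And>t. d t \<ge> 0" and init: "\<And>t. t \<in> {1 - int q..0} \<Longrightarrow> d t = 0"
    and i: "i \<in> {1..q}"
  shows "(\<Sum>t\<in>{1..int T}. d (t - int i)) \<le> (\<Sum>t\<in>{1..int T}. d t)"
proof -
  define A where "A = (\<lambda>t. t - int i) ` {1..int T}"
  have "(\<Sum>t\<in>{1..int T}. d (t - int i)) = (\<Sum>s\<in>A. d s)"
    unfolding A_def by (subst sum.reindex) (auto simp: inj_on_def)
  also have "\<dots> = (\<Sum>s\<in>A \<inter> {1..int T}. d s) + (\<Sum>s\<in>A - {1..int T}. d s)"
    unfolding A_def by (rule sum.Int_Diff) simp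
  also have "(\<Sum>s\<in>A - {1..int T}. d s) = 0"
    using i by (intro sum.neutral ballI init) (auto simp: A_def)
  also have "(\<Sum>s\<in>A \<inter> {1..int T}. d s) \<le> (\<Sum>s\<in>{1..int T}. d s)"
    by (rule sum_mono2) (auto simp: nonneg)
  finally show ?thesis
    by simp
qed

lemma sum_memory_cost_le:
  assumes p: "p \<ge> 1" and init: "\<And>t. t \<in> {1 - int q..0} \<Longrightarrow> x t = r t"
  shows "(\<Sum>t\<in>{1..int T}. memory_cost p q C r t)
    \<le> (\<Sum>t\<in>{1..int T}. memory_cost p q C x t)
      + (1 + (\<Sum>i\<in>{1..q}. induced_norm p (C i))) * (\<Sum>t\<in>{1..int T}. lp_norm p (x t - r t))"
proof -
  define d where "d t = lp_norm p (x t - r t)" for t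
  have "(\<Sum>t\<in>{1..int T}. memory_cost p q C r t)
      \<le> (\<Sum>t\<in>{1..int T}. memory_cost p q C x t + d t + (\<Sum>i\<in>{1..q}. induced_norm p (C i) * d (t - int i)))"
    unfolding d_def by (intro sum_mono memory_cost_le[OF p])
  also have "\<dots> = (\<Sum>t\<in>{1..int T}. memory_cost p q C x t) + (\<Sum>t\<in>{1..int T}. d t)
      + (\<Sum>i\<in>{1..q}. induced_norm p (C i) * (\<Sum>t\<in>{1..int T}. d (t - int i)))"
    by (simp add: sum.distrib sum_distrib_left sum.swap[of _ "{1..int T}"])
  also have "\<dots> \<le> (\<Sum>t\<in>{1..int T}. memory_cost p q C x t) + (\<Sum>t\<in>{1..int T}. d t)
      + (\<Sum>i\<in>{1..q}. induced_norm p (C i) * (\<Sum>t\<in>{1..int T}. d t))"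
    using init induced_norm_nonneg[OF p]
    by (intro add_left_mono sum_mono mult_left_mono sum_shifted_le) (auto simp: d_def lp_norm_nonneg)
  finally show ?thesis
    unfolding d_def by (simp add: sum_distrib_right algebra_simps)
qed

lemma polyhedral_minimizer:
  assumes "polyhedral X p \<alpha> g"
  defines "xs \<equiv> THE xs. xs \<in> X \<and> (\<forall>x\<in>X. g xs \<le> g x)"
  shows "xs \<in> X" and "\<And>x. x \<in> X \<Longrightarrow> g xs \<le> g x"
    and "\<And>x. x \<in> X \<Longrightarrow> \<alpha> * lp_norm p (x - xs) \<le> g x - g xs"
proof -
  have "xs \<in> X \<and> (\<forall>x\<in>X. g xs \<le> g x)"
    unfolding xs_def by (rule theI') (use assms(1) in \<open>simp add: polyhedral_def\<close>)
  then show "xs \<in> X" "\<And>x. x \<in> X \<Longrightarrow> g xs \<le> g x"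
    by auto
  then show "\<And>x. x \<in> X \<Longrightarrow> \<alpha> * lp_norm p (x - xs) \<le> g x - g xs"
    using assms(1) unfolding polyhedral_def by blast
qed

lemma robust_pos:
  "t > 0 \<Longrightarrow> robust X f y x0 t = (THE xs. xs \<in> X \<and> (\<forall>x\<in>X. f xs (y t) \<le> f x (y t)))"
  unfolding robust_def by simp

lemma robust_feasible:
  assumes "\<And>t. t \<in> {1..int T} \<Longrightarrow> polyhedral X p \<alpha> (\<lambda>x. f x (y t))"
  shows "feasible X q T x0 (robust X f y x0)"
  unfolding feasible_def
  using polyhedral_minimizer(1)[OF assms] by (auto simp: robust_pos robust_def)

lemma add_mult_diff_le_max_mult:
  fixes a b g :: real
  assumes "0 \<le> a" "a \<le> b" "0 \<le> g"
  shows "a + g * (b - a) \<le> max g 1 * b"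
proof (cases "g \<le> 1")
  case True
  then have "g * (b - a) \<le> 1 * (b - a)"
    using assms by (intro mult_right_mono) auto
  then show ?thesis
    using True by simp
next
  case False
  then have "1 * a \<le> g * a"
    using assms by (intro mult_right_mono) auto
  then show ?thesis
    using False by (simp add: algebra_simps)
qed

lemma robust_cost_le_cost:
  fixes f :: "real^'n \<Rightarrow> 'y \<Rightarrow> real"
  assumes f_nonneg: "\<And>x v. x \<in> X \<Longrightarrow> v \<in> Y \<Longrightarrow> f x v \<ge> 0"
    and p: "p \<ge> 1" and alpha: "\<alpha> > 0"
    and y: "\<And>t. t \<in> {1..int T} \<Longrightarrow> y t \<in> Y"
    and poly: "\<And>t. t \<in> {1..int T} \<Longrightarrow> polyhedral X p \<alpha> (\<lambda>x. f x (y t))"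
    and x: "feasible X q T x0 x"
  shows "total_cost f p q C T y (robust X f y x0)
    \<le> max (((\<Sum>i\<in>{1..q}. induced_norm p (C i)) + 1) / \<alpha>) 1 * total_cost f p q C T y x"
proof -
  define r where "r = robust X f y x0"
  define \<beta> where "\<beta> = (\<Sum>i\<in>{1..q}. induced_norm p (C i))"
  define F where "F = (\<Sum>t\<in>{1..int T}. f (x t) (y t))"
  define Fr where "Fr = (\<Sum>t\<in>{1..int T}. f (r t) (y t))"
  define Mx where "Mx = (\<Sum>t\<in>{1..int T}. memory_cost p q C x t)"
  define D where "D = (\<Sum>t\<in>{1..int T}. lp_norm p (x t - r t))"
  have \<beta>: "\<beta> \<ge> 0" and D: "D \<ge> 0" and Mx: "Mx \<ge> 0"
    unfolding \<beta>_def D_def Mx_def memory_cost_def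
    by (auto intro!: sum_nonneg induced_norm_nonneg[OF p] lp_norm_nonneg)
  have "feasible X q T x0 r"
    unfolding r_def by (rule robust_feasible) (rule poly)
  then have rX: "r t \<in> X" if "t \<in> {1..int T}" for t
    using that unfolding feasible_def by blast
  have Fr: "Fr \<ge> 0"
    unfolding Fr_def using f_nonneg rX y by (auto intro: sum_nonneg)
  have gap: "\<alpha> * D \<le> F - Fr"
    unfolding D_def F_def Fr_def sum_distrib_left sum_subtractf[symmetric] r_def
    using x polyhedral_minimizer(3)[OF poly] by (intro sum_mono) (auto simp: robust_pos feasible_def)
  then have "(1 + \<beta>) * (\<alpha> * D) \<le> (1 + \<beta>) * (F - Fr)"
    using \<beta> by (intro mult_left_mono) auto
  then have "(1 + \<beta>) * D \<le> (\<beta> + 1) / \<alpha> * (F - Fr)"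
    using alpha by (simp add: field_simps)
  moreover have "(\<Sum>t\<in>{1..int T}. memory_cost p q C r t) \<le> Mx + (1 + \<beta>) * D"
    unfolding Mx_def D_def \<beta>_def
    using x by (intro sum_memory_cost_le[OF p]) (auto simp: feasible_def r_def robust_def)
  ultimately have "total_cost f p q C T y r \<le> Fr + (\<beta> + 1) / \<alpha> * (F - Fr) + Mx"
    unfolding total_cost_eq Fr_def by linarith
  also have "\<dots> \<le> max ((\<beta> + 1) / \<alpha>) 1 * F + Mx"
  proof -
    have "0 \<le> \<alpha> * D"
      using alpha D by simp
    then have "Fr \<le> F"
      using gap by linarith
    then show ?thesis
      using alpha Fr \<beta> by (intro add_right_mono add_mult_diff_le_max_mult) auto
  qed
  also have "\<dots> \<le> max ((\<beta> + 1) / \<alpha>) 1 * (F + Mx)"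
    using mult_right_mono[OF max.cobounded2[of 1 "(\<beta> + 1) / \<alpha>"] Mx] by (simp add: distrib_left)
  finally show ?thesis
    unfolding r_def \<beta>_def F_def Mx_def total_cost_eq .
qed

theorem theorem2:
  fixes X :: "(real^'n) set" and Y :: "(real^'m) set"
    and f :: "real^'n \<Rightarrow> real^'m \<Rightarrow> real"
    and p \<alpha> :: real and q T :: nat and C :: "nat \<Rightarrow> real^'n^'n"
    and x0 :: "int \<Rightarrow> real^'n" and y :: "int \<Rightarrow> real^'m"
  assumes f_nonneg: "\<And>x v. x \<in> X \<Longrightarrow> v \<in> Y \<Longrightarrow> f x v \<ge> 0"
    and p: "p \<ge> 1" and q: "q \<ge> 1" and alpha: "\<alpha> > 0"
    and x0: "\<And>t. t \<in> {1 - int q..0} \<Longrightarrow> x0 t \<in> X"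
    and y: "\<And>t. t \<in> {1..int T} \<Longrightarrow> y t \<in> Y"
    and poly: "\<And>t. t \<in> {1..int T} \<Longrightarrow> polyhedral X p \<alpha> (\<lambda>x. f x (y t))"
  shows "total_cost f p q C T y (robust X f y x0)
    \<le> max (((\<Sum>i\<in>{1..q}. induced_norm p (C i)) + 1) / \<alpha>) 1 * opt_cost X f p q C T y x0"
proof -
  let ?ratio = "max (((\<Sum>i\<in>{1..q}. induced_norm p (C i)) + 1) / \<alpha>) 1"
  let ?cost = "total_cost f p q C T y"
  have "?cost (robust X f y x0) / ?ratio \<le> opt_cost X f p q C T y x0"
    unfolding opt_cost_def
  proof (rule cInf_greatest)
    show "?cost ` {x. feasible X q T x0 x} \<noteq> {}"
      using robust_feasible[of T X p \<alpha> f y q x0] poly by blast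
    show "?cost (robust X f y x0) / ?ratio \<le> c" if "c \<in> ?cost ` {x. feasible X q T x0 x}" for c
      using that robust_cost_le_cost[where f = f and y = y, OF f_nonneg p alpha y poly]
      by (auto simp: divide_le_eq mult.commute)
  qed
  then show ?thesis
    by (simp add: divide_le_eq mult.commute)
qed

end
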